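(* Let $q$ be a power of a prime $p$ and let $X=\{F=0\}\subset\mathbb{P}^n$ be a Frobenius nonclassical hypersurface of degree $d$ over $\mathbb{F}_q$. If $d\leq q+1$ and $F$ is not a $p$-th power, then $X$ contains at least one $\mathbb{F}_q$-point.
   Context: $X$ is Frobenius nonclassical if $F$ divides $\sum_{i=0}^n x_i^q\frac{\partial F}{\partial x_i}$. "$F$ is a $p$-th power" means $F=G^p$ for some polynomial $G$. *)

theory Defs
  imports "HOL-Library.Poly_Mapping" "HOL-Computational_Algebra.Primes"
begin

text \<open>Multivariate polynomials over a ring 'a in the variables x_0, x_1, ...:
  a polynomial is a finitely supported map from monomials (exponent vectors,
  finitely supported maps nat to nat) to coefficients.\<close>
type_synonym 'a mpoly = "(nat \<Rightarrow>\<^sub>0 nat) \<Rightarrow>\<^sub>0 'a"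

definition mpoly_var :: "nat \<Rightarrow> 'a::comm_ring_1 mpoly" where
  "mpoly_var i = Poly_Mapping.single (Poly_Mapping.single i 1) 1"

definition mpoly_eval :: "'a::comm_ring_1 mpoly \<Rightarrow> (nat \<Rightarrow> 'a) \<Rightarrow> 'a" where
  "mpoly_eval F a = (\<Sum>m\<in>Poly_Mapping.keys F. Poly_Mapping.lookup F m * (\<Prod>i\<in>Poly_Mapping.keys m. a i ^ Poly_Mapping.lookup m (i::nat)))"

definition mpoly_pderiv :: "nat \<Rightarrow> 'a::comm_ring_1 mpoly \<Rightarrow> 'a mpoly" where
  "mpoly_pderiv i F =
     (\<Sum>m\<in>Poly_Mapping.keys F. Poly_Mapping.single (m - Poly_Mapping.single i 1)
                                        (of_nat (Poly_Mapping.lookup m i) * Poly_Mapping.lookup F m))"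

definition mon_deg :: "(nat \<Rightarrow>\<^sub>0 nat) \<Rightarrow> nat" where
  "mon_deg m = (\<Sum>i\<in>Poly_Mapping.keys m. Poly_Mapping.lookup m i)"

definition homogeneous :: "nat \<Rightarrow> 'a::comm_ring_1 mpoly \<Rightarrow> bool" where
  "homogeneous d F \<longleftrightarrow> (\<forall>m\<in>Poly_Mapping.keys F. mon_deg m = d)"

definition vars_in :: "nat \<Rightarrow> 'a::comm_ring_1 mpoly \<Rightarrow> bool" where
  "vars_in n F \<longleftrightarrow> (\<forall>m\<in>Poly_Mapping.keys F. Poly_Mapping.keys m \<subseteq> {..n})"

definition frobenius_nonclassical :: "nat \<Rightarrow> nat \<Rightarrow> 'a::comm_ring_1 mpoly \<Rightarrow> bool" where
  "frobenius_nonclassical q n F \<longleftrightarrow>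
     F dvd (\<Sum>i\<le>n. mpoly_var i ^ q * mpoly_pderiv i F)"

end

theory Submission
  imports Defs "HOL-Library.FuncSet" "HOL-Computational_Algebra.Polynomial"
begin

text \<open>Suppose \<open>F\<close> had no zero in \<open>\<bbbF>\<^sub>q\<^bsup>n+1\<^esup> - {0}\<close> and write
  \<open>\<Sum>\<^sub>i x\<^sub>i\<^sup>q \<partial>\<^sub>iF = F G\<close>. At points of \<open>\<bbbF>\<^sub>q\<^bsup>n+1\<^esup>\<close> we have \<open>x\<^sub>i\<^sup>q = x\<^sub>i\<close>, so Euler's identity turns
  the left-hand side into \<open>d F\<close>, and \<open>G\<close> is the constant \<open>d\<close> away from the origin.
  If \<open>G = 0\<close>, then \<open>p\<close> divides \<open>d\<close> but not \<open>q + 1\<close>, so \<open>d \<le> q\<close>; the monomials \<open>x\<^sub>i\<^sup>q \<partial>\<^sub>iF\<close> cannot cancel, all partial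
  derivatives vanish, every exponent of \<open>F\<close> is divisible by \<open>p\<close>, and as Frobenius is onto \<open>\<bbbF>\<^sub>q\<close>,
  \<open>F\<close> is a \<open>p\<close>-th power. If \<open>G \<noteq> 0\<close>, it is homogeneous of degree \<open>q - 1\<close> in at least two
  variables. Multiplying \<open>G\<close> by the monomial complementary to one of its monomials \<open>e\<close> and
  summing over \<open>\<bbbF>\<^sub>q\<^bsup>n+1\<^esup>\<close>, the power sums \<open>\<Sum>\<^sub>x x\<^sup>k\<close> (zero unless \<open>k\<close> is a positive multiple of
  \<open>q - 1\<close>) isolate the coefficient of \<open>e\<close>, whereas constancy of \<open>G\<close> off the origin makes the
  same sum vanish.\<close>

section \<open>Evaluation\<close>

lemma poly_mapping_sum_single:
  "(P :: 'b \<Rightarrow>\<^sub>0 'a::comm_monoid_add) =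
     (\<Sum>m\<in>Poly_Mapping.keys P. Poly_Mapping.single m (Poly_Mapping.lookup P m))"
  by (rule poly_mapping_eqI) (simp add: lookup_sum lookup_single when_def in_keys_iff)

lemma times_mpoly_sum_single:
  fixes F G :: "'a::comm_ring_1 mpoly"
  shows "F * G = (\<Sum>m\<in>Poly_Mapping.keys F. \<Sum>m'\<in>Poly_Mapping.keys G.
      Poly_Mapping.single (m + m') (Poly_Mapping.lookup F m * Poly_Mapping.lookup G m'))"
proof -
  have "F * G = (\<Sum>m\<in>Poly_Mapping.keys F. Poly_Mapping.single m (Poly_Mapping.lookup F m)) *
     (\<Sum>m'\<in>Poly_Mapping.keys G. Poly_Mapping.single m' (Poly_Mapping.lookup G m'))"
    using poly_mapping_sum_single[of F] poly_mapping_sum_single[of G] by simp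
  then show ?thesis
    by (simp add: sum_product mult_single)
qed

lemma lookup_single_times:
  fixes P :: "'a::comm_ring_1 mpoly"
  shows "Poly_Mapping.lookup (Poly_Mapping.single k c * P) (k + b) = c * Poly_Mapping.lookup P b"
proof -
  have "Poly_Mapping.single k c * P =
      (\<Sum>b'\<in>Poly_Mapping.keys P. Poly_Mapping.single (k + b') (c * Poly_Mapping.lookup P b'))"
    by (subst poly_mapping_sum_single[of P]) (simp add: sum_distrib_left mult_single)
  then show ?thesis
    by (simp add: lookup_sum lookup_single when_def in_keys_iff)
qed

lemma mpoly_var_power:
  "mpoly_var i ^ k = Poly_Mapping.single (Poly_Mapping.single i k) (1::'a::comm_ring_1)"
  by (induction k) (simp_all add: power_Suc2 mpoly_var_def mult_single single_add[symmetric])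

lemma keys_mpoly_var_power_times:
  fixes P :: "'a::comm_ring_1 mpoly"
  shows "Poly_Mapping.keys (mpoly_var i ^ q * P) = (+) (Poly_Mapping.single i q) ` Poly_Mapping.keys P"
proof
  show "Poly_Mapping.keys (mpoly_var i ^ q * P) \<subseteq> (+) (Poly_Mapping.single i q) ` Poly_Mapping.keys P"
    using keys_mult[of "mpoly_var i ^ q" P] by (auto simp: mpoly_var_power)
  show "(+) (Poly_Mapping.single i q) ` Poly_Mapping.keys P \<subseteq> Poly_Mapping.keys (mpoly_var i ^ q * P)"
    by (auto simp: mpoly_var_power lookup_single_times in_keys_iff)
qed

definition mon_eval :: "(nat \<Rightarrow>\<^sub>0 nat) \<Rightarrow> (nat \<Rightarrow> 'a::comm_monoid_mult) \<Rightarrow> 'a" where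
  "mon_eval m a = (\<Prod>i\<in>Poly_Mapping.keys m. a i ^ Poly_Mapping.lookup m i)"

lemma mon_eval_eq_prod_superset:
  "finite S \<Longrightarrow> Poly_Mapping.keys m \<subseteq> S \<Longrightarrow>
     mon_eval m a = (\<Prod>i\<in>S. a i ^ Poly_Mapping.lookup m i)"
  unfolding mon_eval_def by (rule prod.mono_neutral_left) (auto simp: in_keys_iff)

lemma mon_eval_add: "mon_eval (m + m') a = mon_eval m a * mon_eval m' a"
proof -
  let ?S = "Poly_Mapping.keys m \<union> Poly_Mapping.keys m'"
  have "mon_eval (m + m') a = (\<Prod>i\<in>?S. a i ^ Poly_Mapping.lookup (m + m') i)"
    by (rule mon_eval_eq_prod_superset) (auto dest: subsetD[OF keys_add])
  also have "\<dots> = mon_eval m a * mon_eval m' a"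
    by (simp add: lookup_add power_add prod.distrib mon_eval_eq_prod_superset[of ?S])
  finally show ?thesis .
qed

lemma mon_eval_single [simp]: "mon_eval (Poly_Mapping.single i k) a = a i ^ k"
  by (simp add: mon_eval_def)

lemma mpoly_eval_eq_sum_superset:
  "finite S \<Longrightarrow> Poly_Mapping.keys F \<subseteq> S \<Longrightarrow>
     mpoly_eval F a = (\<Sum>m\<in>S. Poly_Mapping.lookup F m * mon_eval m a)"
  unfolding mpoly_eval_def mon_eval_def[symmetric]
  by (rule sum.mono_neutral_left) (auto simp: in_keys_iff)

lemma mpoly_eval_add: "mpoly_eval (F + G) a = mpoly_eval F a + mpoly_eval G a"
proof -
  let ?S = "Poly_Mapping.keys F \<union> Poly_Mapping.keys G"
  have "mpoly_eval (F + G) a = (\<Sum>m\<in>?S. Poly_Mapping.lookup (F + G) m * mon_eval m a)"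
    by (rule mpoly_eval_eq_sum_superset) (auto dest: subsetD[OF keys_add])
  also have "\<dots> = mpoly_eval F a + mpoly_eval G a"
    by (simp add: lookup_add distrib_right sum.distrib mpoly_eval_eq_sum_superset[of ?S])
  finally show ?thesis .
qed

lemma mpoly_eval_zero [simp]: "mpoly_eval 0 a = 0"
  by (simp add: mpoly_eval_def)

lemma mpoly_eval_one [simp]: "mpoly_eval 1 a = 1"
  by (simp add: mpoly_eval_def)

lemma mpoly_eval_single: "mpoly_eval (Poly_Mapping.single m c) a = c * mon_eval m a"
  by (simp add: mpoly_eval_def mon_eval_def)

lemma mpoly_eval_sum: "mpoly_eval (sum f A) a = (\<Sum>x\<in>A. mpoly_eval (f x) a)"
  by (induction A rule: infinite_finite_induct) (simp_all add: mpoly_eval_add)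

lemma mpoly_eval_mult: "mpoly_eval (F * G) a = mpoly_eval F a * mpoly_eval G a"
  by (simp add: times_mpoly_sum_single[of F G] mpoly_eval_sum mpoly_eval_single mon_eval_add
      mpoly_eval_def[of F] mpoly_eval_def[of G] mon_eval_def[symmetric] sum_product mult_ac)

lemma mpoly_eval_power: "mpoly_eval (F ^ k) a = mpoly_eval F a ^ k"
  by (induction k) (simp_all add: mpoly_eval_mult)

lemma mpoly_eval_var: "mpoly_eval (mpoly_var i) a = a i"
  by (simp add: mpoly_var_def mpoly_eval_single)

lemma mpoly_eval_vars_in:
  assumes "vars_in n P"
  shows "mpoly_eval P a =
    (\<Sum>m\<in>Poly_Mapping.keys P. Poly_Mapping.lookup P m * (\<Prod>i\<le>n. a i ^ Poly_Mapping.lookup m i))"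
  using assms unfolding vars_in_def mpoly_eval_def mon_eval_def[symmetric]
  by (intro sum.cong refl arg_cong[where f = "(*) _"] mon_eval_eq_prod_superset) auto

lemma keys_add_nat:
  "Poly_Mapping.keys (m + m') = Poly_Mapping.keys m \<union> Poly_Mapping.keys (m' :: nat \<Rightarrow>\<^sub>0 nat)"
  by (auto simp: in_keys_iff lookup_add)

lemma mon_deg_eq_sum_superset:
  "finite S \<Longrightarrow> Poly_Mapping.keys m \<subseteq> S \<Longrightarrow> mon_deg m = (\<Sum>i\<in>S. Poly_Mapping.lookup m i)"
  unfolding mon_deg_def by (rule sum.mono_neutral_left) (auto simp: in_keys_iff)

lemma mon_deg_add: "mon_deg (m + m') = mon_deg m + mon_deg m'"
proof -
  let ?S = "Poly_Mapping.keys m \<union> Poly_Mapping.keys m'"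
  have "mon_deg (m + m') = (\<Sum>i\<in>?S. Poly_Mapping.lookup (m + m') i)"
    by (rule mon_deg_eq_sum_superset) (auto dest: subsetD[OF keys_add])
  also have "\<dots> = mon_deg m + mon_deg m'"
    by (simp add: lookup_add sum.distrib mon_deg_eq_sum_superset[of ?S])
  finally show ?thesis .
qed

lemma mon_deg_single [simp]: "mon_deg (Poly_Mapping.single i k) = k"
  by (simp add: mon_deg_def)

lemma lookup_le_mon_deg: "Poly_Mapping.lookup m i \<le> mon_deg m"
  by (cases "i \<in> Poly_Mapping.keys m") (auto simp: mon_deg_def in_keys_iff intro: member_le_sum)

lemma minus_single_plus_single:
  "0 < Poly_Mapping.lookup m i \<Longrightarrow>
     (m - Poly_Mapping.single i 1) + Poly_Mapping.single i 1 = (m :: nat \<Rightarrow>\<^sub>0 nat)"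
  by (rule poly_mapping_eqI) (auto simp: lookup_add lookup_minus lookup_single when_def)

lemma mon_eval_minus_single:
  assumes "0 < Poly_Mapping.lookup m i"
  shows "a i * mon_eval (m - Poly_Mapping.single i 1) a = mon_eval m a"
proof -
  have "mon_eval m a = mon_eval (m - Poly_Mapping.single i 1) a * mon_eval (Poly_Mapping.single i 1) a"
    using mon_eval_add[of "m - Poly_Mapping.single i 1" "Poly_Mapping.single i 1" a]
    unfolding minus_single_plus_single[OF assms] .
  then show ?thesis
    by (simp add: mult.commute)
qed

lemma mon_deg_minus_single:
  assumes "0 < Poly_Mapping.lookup m i"
  shows "Suc (mon_deg (m - Poly_Mapping.single i 1)) = mon_deg m"
  using mon_deg_add[of "m - Poly_Mapping.single i 1" "Poly_Mapping.single i 1"]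
  unfolding minus_single_plus_single[OF assms] by simp

lemma keys_minus_single_subset:
  "Poly_Mapping.keys (m - Poly_Mapping.single i 1) \<subseteq> Poly_Mapping.keys (m :: nat \<Rightarrow>\<^sub>0 nat)"
  by (auto simp: in_keys_iff lookup_minus)

section \<open>Partial derivatives and the Frobenius sum\<close>

lemma mpoly_eval_pderiv:
  "mpoly_eval (mpoly_pderiv i F) a =
     (\<Sum>m\<in>Poly_Mapping.keys F. of_nat (Poly_Mapping.lookup m i) * Poly_Mapping.lookup F m *
        mon_eval (m - Poly_Mapping.single i 1) a)"
  by (simp add: mpoly_pderiv_def mpoly_eval_sum mpoly_eval_single)

lemma keys_pderiv:
  assumes "b \<in> Poly_Mapping.keys (mpoly_pderiv i F)"
  obtains m where "m \<in> Poly_Mapping.keys F" "0 < Poly_Mapping.lookup m i"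
    and "b = m - Poly_Mapping.single i 1"
proof -
  have "b \<in> (\<Union>m\<in>Poly_Mapping.keys F. Poly_Mapping.keys (Poly_Mapping.single (m - Poly_Mapping.single i 1)
                                        (of_nat (Poly_Mapping.lookup m i) * Poly_Mapping.lookup F m)))"
    using assms unfolding mpoly_pderiv_def by (rule subsetD[OF keys_sum])
  then obtain m where m: "m \<in> Poly_Mapping.keys F"
    and "b \<in> Poly_Mapping.keys (Poly_Mapping.single (m - Poly_Mapping.single i 1)
                                   (of_nat (Poly_Mapping.lookup m i) * Poly_Mapping.lookup F m))"
    by blast
  then have "b = m - Poly_Mapping.single i 1"
    and "of_nat (Poly_Mapping.lookup m i) * Poly_Mapping.lookup F m \<noteq> 0"
    by (auto split: if_splits)
  with m that show ?thesis
    by (metis gr0I mult_zero_left of_nat_0)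
qed

lemma lookup_pderiv:
  fixes F :: "'a::comm_ring_1 mpoly"
  assumes "0 < Poly_Mapping.lookup m i"
  shows "Poly_Mapping.lookup (mpoly_pderiv i F) (m - Poly_Mapping.single i 1) =
    of_nat (Poly_Mapping.lookup m i) * Poly_Mapping.lookup F m"
proof -
  have "m' = m" if "m' - Poly_Mapping.single i 1 = m - Poly_Mapping.single i 1"
    "0 < Poly_Mapping.lookup m' i" for m'
    using minus_single_plus_single[OF that(2)] minus_single_plus_single[OF assms] that(1) by metis
  then have "(of_nat (Poly_Mapping.lookup m' i) * Poly_Mapping.lookup F m'
        when m' - Poly_Mapping.single i 1 = m - Poly_Mapping.single i 1) =
      (if m' = m then of_nat (Poly_Mapping.lookup m i) * Poly_Mapping.lookup F m else 0)" for m'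
    by (cases "Poly_Mapping.lookup m' i = 0") (auto simp: when_def)
  then show ?thesis
    by (simp add: mpoly_pderiv_def lookup_sum lookup_single in_keys_iff)
qed

lemma mon_deg_keys_pderiv:
  assumes "homogeneous d F" "b \<in> Poly_Mapping.keys (mpoly_pderiv i F)"
  shows "Suc (mon_deg b) = d"
proof -
  obtain m where "m \<in> Poly_Mapping.keys F" "0 < Poly_Mapping.lookup m i"
    and "b = m - Poly_Mapping.single i 1"
    using assms(2) by (rule keys_pderiv)
  then show ?thesis
    using assms(1) mon_deg_minus_single[of m i] unfolding homogeneous_def by simp
qed

lemma vars_in_pderiv:
  assumes "vars_in n F"
  shows "vars_in n (mpoly_pderiv i F)"
  unfolding vars_in_def
proof
  fix b assume "b \<in> Poly_Mapping.keys (mpoly_pderiv i F)"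
  then obtain m where "m \<in> Poly_Mapping.keys F" "b = m - Poly_Mapping.single i 1"
    by (rule keys_pderiv)
  then show "Poly_Mapping.keys b \<subseteq> {..n}"
    using assms keys_minus_single_subset[of m i] unfolding vars_in_def by blast
qed

lemma mpoly_euler_identity:
  fixes F :: "'a::comm_ring_1 mpoly"
  assumes "homogeneous d F" "vars_in n F"
  shows "(\<Sum>i\<le>n. a i * mpoly_eval (mpoly_pderiv i F) a) = of_nat d * mpoly_eval F a"
proof -
  have summand: "a i * (of_nat (Poly_Mapping.lookup m i) * c * mon_eval (m - Poly_Mapping.single i 1) a) =
      of_nat (Poly_Mapping.lookup m i) * (c * mon_eval m a)" for i m c
  proof (cases "Poly_Mapping.lookup m i = 0")
    case False
    then have "a i * mon_eval (m - Poly_Mapping.single i 1) a = mon_eval m a"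
      by (intro mon_eval_minus_single) simp
    then show ?thesis
      by (metis mult.assoc mult.left_commute)
  qed simp
  have degree: "(\<Sum>i\<le>n. Poly_Mapping.lookup m i) = d" if "m \<in> Poly_Mapping.keys F" for m
    using assms that mon_deg_eq_sum_superset[of "{..n}" m]
    unfolding homogeneous_def vars_in_def by auto
  have "(\<Sum>i\<le>n. a i * mpoly_eval (mpoly_pderiv i F) a) =
      (\<Sum>i\<le>n. \<Sum>m\<in>Poly_Mapping.keys F.
         of_nat (Poly_Mapping.lookup m i) * (Poly_Mapping.lookup F m * mon_eval m a))"
    by (simp only: mpoly_eval_pderiv sum_distrib_left summand)
  also have "\<dots> = (\<Sum>m\<in>Poly_Mapping.keys F. \<Sum>i\<le>n.
         of_nat (Poly_Mapping.lookup m i) * (Poly_Mapping.lookup F m * mon_eval m a))"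
    by (rule sum.swap)
  also have "\<dots> = (\<Sum>m\<in>Poly_Mapping.keys F. of_nat d * (Poly_Mapping.lookup F m * mon_eval m a))"
    by (intro sum.cong refl) (metis degree of_nat_sum sum_distrib_right)
  also have "\<dots> = of_nat d * mpoly_eval F a"
    by (simp add: mpoly_eval_def mon_eval_def sum_distrib_left)
  finally show ?thesis .
qed

definition frobenius_sum :: "nat \<Rightarrow> nat \<Rightarrow> 'a::comm_ring_1 mpoly \<Rightarrow> 'a mpoly" where
  "frobenius_sum q n F = (\<Sum>i\<le>n. mpoly_var i ^ q * mpoly_pderiv i F)"

lemma frobenius_nonclassical_iff_dvd:
  "frobenius_nonclassical q n F \<longleftrightarrow> F dvd frobenius_sum q n F"
  by (simp add: frobenius_nonclassical_def frobenius_sum_def)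

lemma keys_frobenius_sum:
  assumes "k \<in> Poly_Mapping.keys (frobenius_sum q n F)"
  obtains i b where "i \<le> n" "b \<in> Poly_Mapping.keys (mpoly_pderiv i F)"
    and "k = Poly_Mapping.single i q + b"
proof -
  have "k \<in> (\<Union>i\<le>n. Poly_Mapping.keys (mpoly_var i ^ q * mpoly_pderiv i F))"
    using assms unfolding frobenius_sum_def by (rule subsetD[OF keys_sum])
  with that show ?thesis
    by (auto simp: keys_mpoly_var_power_times)
qed

lemma homogeneous_frobenius_sum:
  assumes "homogeneous d F"
  shows "homogeneous (q + d - 1) (frobenius_sum q n F)"
  unfolding homogeneous_def
proof
  fix k assume "k \<in> Poly_Mapping.keys (frobenius_sum q n F)"
  then obtain i b where b: "b \<in> Poly_Mapping.keys (mpoly_pderiv i F)"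
    and k: "k = Poly_Mapping.single i q + b"
    by (rule keys_frobenius_sum)
  show "mon_deg k = q + d - 1"
    using mon_deg_keys_pderiv[OF assms b] by (simp add: k mon_deg_add)
qed

lemma vars_in_frobenius_sum:
  assumes "vars_in n F"
  shows "vars_in n (frobenius_sum q n F)"
  unfolding vars_in_def
proof
  fix k assume "k \<in> Poly_Mapping.keys (frobenius_sum q n F)"
  then obtain i b where "i \<le> n" "b \<in> Poly_Mapping.keys (mpoly_pderiv i F)"
    and "k = Poly_Mapping.single i q + b"
    by (rule keys_frobenius_sum)
  then show "Poly_Mapping.keys k \<subseteq> {..n}"
    using vars_in_pderiv[OF assms, of i] keys_add[of "Poly_Mapping.single i q" b]
    unfolding vars_in_def by (auto split: if_splits)
qed

lemma mpoly_eval_frobenius_sum: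
  fixes F :: "'a::comm_ring_1 mpoly"
  assumes "\<And>x::'a. x ^ q = x" "homogeneous d F" "vars_in n F"
  shows "mpoly_eval (frobenius_sum q n F) a = of_nat d * mpoly_eval F a"
  using mpoly_euler_identity[OF assms(2,3)]
  by (simp add: frobenius_sum_def mpoly_eval_sum mpoly_eval_mult mpoly_eval_power mpoly_eval_var assms(1))

lemma pderiv_eq_0_if_frobenius_sum_eq_0:
  fixes F :: "'a::comm_ring_1 mpoly"
  assumes "homogeneous d F" "d \<le> q" "frobenius_sum q n F = 0" "i \<le> n"
  shows "mpoly_pderiv i F = 0"
proof (rule ccontr)
  assume "mpoly_pderiv i F \<noteq> 0"
  then obtain b where b: "b \<in> Poly_Mapping.keys (mpoly_pderiv i F)"
    by (metis keys_eq_empty ex_in_conv)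
  let ?t = "Poly_Mapping.single i q + b"
  have "?t \<notin> Poly_Mapping.keys (mpoly_var j ^ q * mpoly_pderiv j F)" if "j \<noteq> i" for j
  proof
    assume "?t \<in> Poly_Mapping.keys (mpoly_var j ^ q * mpoly_pderiv j F)"
    then obtain b' where b': "b' \<in> Poly_Mapping.keys (mpoly_pderiv j F)"
      and "?t = Poly_Mapping.single j q + b'"
      by (auto simp: keys_mpoly_var_power_times)
    then have "q + Poly_Mapping.lookup b i = Poly_Mapping.lookup b' i"
      using that by (metis lookup_add lookup_single_eq lookup_single_not_eq add_0)
    moreover have "Poly_Mapping.lookup b' i < d"
      using lookup_le_mon_deg[of b' i] mon_deg_keys_pderiv[OF assms(1) b'] by simp
    ultimately show False
      using assms(2) by simp
  qed
  then have "(\<Sum>j\<in>{..n} - {i}. Poly_Mapping.lookup (mpoly_var j ^ q * mpoly_pderiv j F) ?t) = 0"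
    by (intro sum.neutral) (auto simp: in_keys_iff)
  then have "Poly_Mapping.lookup (frobenius_sum q n F) ?t =
      Poly_Mapping.lookup (mpoly_var i ^ q * mpoly_pderiv i F) ?t"
    unfolding frobenius_sum_def lookup_sum using assms(4) by (subst sum.remove[of _ i]) auto
  then show False
    using assms(3) b by (simp add: mpoly_var_power lookup_single_times in_keys_iff)
qed

section \<open>Cofactors\<close>

definition restrict_monomials :: "((nat \<Rightarrow>\<^sub>0 nat) \<Rightarrow> bool) \<Rightarrow> 'a::comm_ring_1 mpoly \<Rightarrow> 'a mpoly" where
  "restrict_monomials P F =
     (\<Sum>m\<in>{m\<in>Poly_Mapping.keys F. P m}. Poly_Mapping.single m (Poly_Mapping.lookup F m))"

lemma lookup_restrict_monomials:
  "Poly_Mapping.lookup (restrict_monomials P F) m = (if P m then Poly_Mapping.lookup F m else 0)"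
  by (simp add: restrict_monomials_def lookup_sum lookup_single when_def in_keys_iff)

lemma restrict_monomials_add:
  "restrict_monomials P (F + G) = restrict_monomials P F + restrict_monomials P G"
  by (rule poly_mapping_eqI) (simp add: lookup_restrict_monomials lookup_add)

lemma restrict_monomials_zero [simp]: "restrict_monomials P 0 = 0"
  by (simp add: restrict_monomials_def)

lemma restrict_monomials_sum:
  "restrict_monomials P (sum f A) = (\<Sum>x\<in>A. restrict_monomials P (f x))"
  by (induction A rule: infinite_finite_induct) (simp_all add: restrict_monomials_add)

lemma restrict_monomials_single:
  "restrict_monomials P (Poly_Mapping.single m c) = (if P m then Poly_Mapping.single m c else 0)"
  by (rule poly_mapping_eqI) (simp add: lookup_restrict_monomials lookup_single when_def)

lemma restrict_monomials_mult:
  fixes F G :: "'a::comm_ring_1 mpoly"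
  assumes "\<And>a b. a \<in> Poly_Mapping.keys F \<Longrightarrow> P (a + b) = Q b"
  shows "restrict_monomials P (F * G) = F * restrict_monomials Q G"
proof -
  have "F * restrict_monomials Q G =
      (\<Sum>m\<in>Poly_Mapping.keys F. \<Sum>m'\<in>Poly_Mapping.keys G.
         Poly_Mapping.single m (Poly_Mapping.lookup F m) *
         restrict_monomials Q (Poly_Mapping.single m' (Poly_Mapping.lookup G m')))"
    by (subst (1 2) poly_mapping_sum_single) (simp add: restrict_monomials_sum sum_product)
  also have "\<dots> = (\<Sum>m\<in>Poly_Mapping.keys F. \<Sum>m'\<in>Poly_Mapping.keys G.
      restrict_monomials P (Poly_Mapping.single (m + m') (Poly_Mapping.lookup F m * Poly_Mapping.lookup G m')))"
    by (intro sum.cong refl) (simp add: restrict_monomials_single mult_single assms)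
  also have "\<dots> = restrict_monomials P (F * G)"
    by (simp add: times_mpoly_sum_single[of F G] restrict_monomials_sum)
  finally show ?thesis by simp
qed

lemma vars_in_cofactor:
  fixes F G :: "'a::idom mpoly"
  assumes "F \<noteq> 0" "vars_in n F" "vars_in n (F * G)"
  shows "vars_in n G"
proof -
  let ?R = "\<lambda>m::nat \<Rightarrow>\<^sub>0 nat. Poly_Mapping.keys m \<subseteq> {..n}"
  have "F * restrict_monomials ?R G = restrict_monomials ?R (F * G)"
    using assms(2) unfolding vars_in_def
    by (intro restrict_monomials_mult[symmetric]) (auto simp: keys_add_nat)
  also have "\<dots> = F * G"
    using assms(3) unfolding vars_in_def
    by (intro poly_mapping_eqI) (auto simp: lookup_restrict_monomials in_keys_iff)
  finally have restricted: "restrict_monomials ?R G = G"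
    using assms(1) by simp
  show ?thesis
    unfolding vars_in_def
  proof
    fix m assume "m \<in> Poly_Mapping.keys G"
    then have "Poly_Mapping.lookup (restrict_monomials ?R G) m \<noteq> 0"
      by (simp add: restricted in_keys_iff)
    then show "?R m"
      by (simp add: lookup_restrict_monomials split: if_splits)
  qed
qed

lemma homogeneous_cofactor:
  fixes F G :: "'a::idom mpoly"
  assumes "F \<noteq> 0" "homogeneous d F" "homogeneous (d + e) (F * G)"
  shows "homogeneous e G"
  unfolding homogeneous_def
proof
  fix m assume m: "m \<in> Poly_Mapping.keys G"
  let ?k = "mon_deg m"
  have "F * restrict_monomials (\<lambda>b. mon_deg b = ?k) G =
      restrict_monomials (\<lambda>b. mon_deg b = d + ?k) (F * G)"
    using assms(2) unfolding homogeneous_def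
    by (intro restrict_monomials_mult[symmetric]) (simp add: mon_deg_add)
  moreover have "Poly_Mapping.lookup (restrict_monomials (\<lambda>b. mon_deg b = ?k) G) m \<noteq> 0"
    using m by (simp add: lookup_restrict_monomials in_keys_iff)
  ultimately have "restrict_monomials (\<lambda>b. mon_deg b = d + ?k) (F * G) \<noteq> 0"
    using assms(1) by auto
  then obtain t where "t \<in> Poly_Mapping.keys (restrict_monomials (\<lambda>b. mon_deg b = d + ?k) (F * G))"
    by (metis keys_eq_empty ex_in_conv)
  then have "t \<in> Poly_Mapping.keys (F * G)" "mon_deg t = d + ?k"
    by (auto simp: in_keys_iff lookup_restrict_monomials split: if_splits)
  then show "?k = e"
    using assms(3) unfolding homogeneous_def by auto
qed

lemma vars_in_frobenius_cofactor:
  fixes F G :: "'a::idom mpoly"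
  assumes "F \<noteq> 0" "vars_in n F" "frobenius_sum q n F = F * G"
  shows "vars_in n G"
  using vars_in_cofactor[OF assms(1,2)] vars_in_frobenius_sum[OF assms(2), of q] assms(3) by simp

lemma homogeneous_frobenius_cofactor:
  fixes F G :: "'a::idom mpoly"
  assumes "F \<noteq> 0" "homogeneous d F" "1 \<le> d" "1 \<le> q" "frobenius_sum q n F = F * G"
  shows "homogeneous (q - 1) G"
proof -
  have "q + d - 1 = d + (q - 1)"
    using assms(3,4) by simp
  then have "homogeneous (d + (q - 1)) (F * G)"
    using homogeneous_frobenius_sum[OF assms(2), of q n] assms(5) by simp
  then show ?thesis
    by (rule homogeneous_cofactor[OF assms(1,2)])
qed

lemma mpoly_eval_frobenius_cofactor:
  fixes F G :: "'a::idom mpoly"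
  assumes "\<And>x::'a. x ^ q = x" "homogeneous d F" "vars_in n F" "frobenius_sum q n F = F * G"
    and "mpoly_eval F a \<noteq> 0"
  shows "mpoly_eval G a = of_nat d"
proof -
  have "mpoly_eval F a * mpoly_eval G a = mpoly_eval F a * of_nat d"
    using mpoly_eval_frobenius_sum[OF assms(1-3), of a]
    by (simp add: assms(4) mpoly_eval_mult mult.commute)
  with assms(5) show ?thesis
    by simp
qed

section \<open>Finite fields and power sums\<close>

lemma prime_CHAR_finite_field: "prime CHAR('a::{finite,field})"
  by (rule prime_CHAR_semidom) (simp add: finite_imp_CHAR_pos)

lemma of_nat_card_UNIV_eq_0: "of_nat (card (UNIV :: 'a::{finite,ring_1} set)) = (0::'a)"
proof -
  have "(\<Sum>y\<in>UNIV. 1 + y) = (\<Sum>y\<in>UNIV. y :: 'a)"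
    by (rule sum.reindex_bij_witness[of _ "\<lambda>y. y - 1" "\<lambda>y. 1 + y"]) auto
  then show ?thesis
    by (simp add: sum.distrib)
qed

lemma CHAR_eq_if_card_eq_prime_power:
  assumes "prime p" "card (UNIV :: 'a::{finite,field} set) = p ^ k"
  shows "CHAR('a) = p"
proof -
  have "CHAR('a) dvd p ^ k"
    using of_nat_card_UNIV_eq_0[where 'a = 'a] assms(2) of_nat_eq_0_iff_char_dvd by metis
  then have "CHAR('a) dvd p"
    using prime_CHAR_finite_field prime_dvd_power by blast
  then show ?thesis
    using prime_CHAR_finite_field assms(1) primes_dvd_imp_eq by blast
qed

lemma card_UNIV_field_ge_2: "2 \<le> card (UNIV :: 'a::{finite,field} set)"
  using card_mono[of "UNIV :: 'a set" "{0, 1}"] by simp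

lemma power_card_minus_one_eq_1:
  fixes x :: "'a::{finite,field}"
  assumes "x \<noteq> 0"
  shows "x ^ (card (UNIV :: 'a set) - 1) = 1"
proof -
  have "x ^ card (UNIV - {0::'a}) * (\<Prod>y\<in>UNIV - {0}. y) = (\<Prod>y\<in>UNIV - {0}. x * y)"
    by (simp add: prod.distrib)
  also have "\<dots> = (\<Prod>y\<in>UNIV - {0}. y)"
    by (rule prod.reindex_bij_witness[of _ "\<lambda>y. y / x" "\<lambda>y. x * y"]) (use assms in auto)
  finally have "x ^ card (UNIV - {0::'a}) = 1"
    by simp
  then show ?thesis
    by (simp add: card_Diff_subset)
qed

lemma power_card_eq_self: "(x :: 'a::{finite,field}) ^ card (UNIV :: 'a set) = x"
proof (cases "x = 0")
  case False
  have "x ^ card (UNIV :: 'a set) = x * x ^ (card (UNIV :: 'a set) - 1)"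
    using card_UNIV_field_ge_2[where 'a = 'a] by (metis Suc_diff_1 power_Suc zero_less_numeral order.strict_trans2)
  then show ?thesis
    using power_card_minus_one_eq_1[OF False] by simp
qed (use card_UNIV_field_ge_2[where 'a = 'a] in simp)

lemma inj_CHAR_power: "inj (\<lambda>x::'a::{finite,field}. x ^ CHAR('a))"
proof (rule injI)
  fix x z :: 'a
  assume "x ^ CHAR('a) = z ^ CHAR('a)"
  moreover have "(x + - z) ^ CHAR('a) = x ^ CHAR('a) + (- z) ^ CHAR('a)"
    by (rule freshmans_dream[OF prime_CHAR_finite_field refl])
  moreover have "(- z) ^ CHAR('a) = - (z ^ CHAR('a))"
    by (rule minus_power_prime_CHAR[OF refl prime_CHAR_finite_field])
  ultimately have "(x - z) ^ CHAR('a) = 0"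
    by simp
  then have "x - z = 0"
    by (rule power_eq_0_iff[THEN iffD1, THEN conjunct1])
  then show "x = z"
    by simp
qed

lemma ex_CHAR_root: "\<exists>x. x ^ CHAR('a) = (y :: 'a::{finite,field})"
  using finite_UNIV_inj_surj[OF finite_UNIV inj_CHAR_power] by (metis surjD)

definition power_sum :: "nat \<Rightarrow> 'a::{finite,field}" where
  "power_sum k = (\<Sum>x\<in>UNIV. x ^ k)"

lemma power_sum_0: "power_sum 0 = 0"
  by (simp add: power_sum_def of_nat_card_UNIV_eq_0)

lemma power_sum_multiple:
  assumes "0 < k" "(card (UNIV :: 'a set) - 1) dvd k"
  shows "power_sum k = (-1 :: 'a::{finite,field})"
proof -
  have unit: "x ^ k = 1" if "x \<noteq> 0" for x :: 'a
    using assms(2) power_card_minus_one_eq_1[OF that] by (auto simp: power_mult)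
  have "power_sum k = (\<Sum>x\<in>UNIV - {0::'a}. x ^ k)"
    unfolding power_sum_def using assms(1) by (intro sum.mono_neutral_right) auto
  also have "\<dots> = (\<Sum>x\<in>UNIV - {0::'a}. 1)"
    using unit by (intro sum.cong) auto
  also have "\<dots> = of_nat (card (UNIV :: 'a set)) - 1"
    using card_UNIV_field_ge_2[where 'a = 'a] by (simp add: card_Diff_subset)
  finally show ?thesis
    by (simp add: of_nat_card_UNIV_eq_0)
qed

lemma ex_power_ne_1:
  assumes "0 < r" "r < card (UNIV :: 'a::{finite,field} set) - 1"
  shows "\<exists>c::'a. c \<noteq> 0 \<and> c ^ r \<noteq> 1"
proof (rule ccontr)
  assume "\<not> ?thesis"
  then have roots: "UNIV - {0::'a} \<subseteq> {x. poly (monom 1 r - 1) x = 0}"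
    by (auto simp: poly_monom)
  have "poly (monom (1::'a) r - 1) 0 \<noteq> 0"
    using assms(1) by (simp add: poly_monom zero_power)
  then have nonzero: "monom (1::'a) r - 1 \<noteq> 0"
    by auto
  have "card (UNIV - {0::'a}) \<le> card {x. poly (monom (1::'a) r - 1) x = 0}"
    using roots by (intro card_mono) auto
  also have "\<dots> \<le> degree (monom (1::'a) r - 1)"
    by (rule card_poly_roots_bound[OF nonzero])
  also have "\<dots> \<le> r"
    by (rule order.trans[OF degree_diff_le_max]) (simp add: degree_monom_le)
  finally show False
    using assms(2) by (simp add: card_Diff_subset)
qed

lemma power_sum_non_multiple:
  assumes "\<not> (card (UNIV :: 'a set) - 1) dvd k"
  shows "power_sum k = (0 :: 'a::{finite,field})"
proof -
  let ?q = "card (UNIV :: 'a set)"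
  define r where "r = k mod (?q - 1)"
  have "0 < r" "r < ?q - 1"
    using assms card_UNIV_field_ge_2[where 'a = 'a] unfolding r_def
    by (auto simp: dvd_eq_mod_eq_0)
  then obtain c :: 'a where c: "c \<noteq> 0" "c ^ r \<noteq> 1"
    using ex_power_ne_1 by blast
  have "k = (?q - 1) * (k div (?q - 1)) + r"
    unfolding r_def by simp
  then have "c ^ k = (c ^ (?q - 1)) ^ (k div (?q - 1)) * c ^ r"
    by (metis power_add power_mult)
  then have ck: "c ^ k \<noteq> 1"
    using c power_card_minus_one_eq_1[OF c(1)] by simp
  have "power_sum k = (\<Sum>x\<in>UNIV. (c * x) ^ k)"
    unfolding power_sum_def
    by (rule sum.reindex_bij_witness[of _ "\<lambda>y. c * y" "\<lambda>y. y / c"]) (use c in auto)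
  also have "\<dots> = c ^ k * power_sum k"
    by (simp add: power_sum_def power_mult_distrib sum_distrib_left)
  finally show ?thesis
    using ck by (metis mult_cancel_right1)
qed

lemma card_minus_one_le_if_power_sum_ne_0:
  assumes "power_sum k \<noteq> (0::'a::{finite,field})"
  shows "card (UNIV :: 'a set) - 1 \<le> k"
  using assms power_sum_0[where 'a = 'a] power_sum_non_multiple[where 'a = 'a]
  by (cases "k = 0") (auto intro: dvd_imp_le)

lemma sum_PiE_prod_power:
  fixes n :: nat
  shows "(\<Sum>a\<in>PiE {..n} (\<lambda>_. UNIV). \<Prod>i\<le>n. (a i :: 'a::{finite,field}) ^ k i) = (\<Prod>i\<le>n. power_sum (k i))"
  unfolding power_sum_def by (subst prod_sum_PiE) auto

lemma sum_PiE_mpoly_eval_times_monomial: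
  fixes P :: "'a::{finite,field} mpoly"
  assumes "vars_in n P"
  shows "(\<Sum>a\<in>PiE {..n} (\<lambda>_. UNIV). mpoly_eval P a * (\<Prod>i\<le>n. a i ^ r i)) =
    (\<Sum>m\<in>Poly_Mapping.keys P. Poly_Mapping.lookup P m * (\<Prod>i\<le>n. power_sum (Poly_Mapping.lookup m i + r i)))"
proof -
  have "(\<Sum>a\<in>PiE {..n} (\<lambda>_. UNIV). mpoly_eval P a * (\<Prod>i\<le>n. a i ^ r i)) =
      (\<Sum>a\<in>PiE {..n} (\<lambda>_. UNIV). \<Sum>m\<in>Poly_Mapping.keys P.
         Poly_Mapping.lookup P m * (\<Prod>i\<le>n. a i ^ (Poly_Mapping.lookup m i + r i)))"
    by (simp add: mpoly_eval_vars_in[OF assms] sum_distrib_right power_add prod.distrib mult.assoc)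
  also have "\<dots> = (\<Sum>m\<in>Poly_Mapping.keys P. Poly_Mapping.lookup P m *
      (\<Sum>a\<in>PiE {..n} (\<lambda>_. UNIV). \<Prod>i\<le>n. a i ^ (Poly_Mapping.lookup m i + r i)))"
    by (subst sum.swap) (simp add: sum_distrib_left)
  finally show ?thesis
    by (simp add: sum_PiE_prod_power)
qed

text \<open>A product of power sums is nonzero only if every exponent \<open>m\<^sub>i + (q - 1 - e\<^sub>i)\<close> is at least
  \<open>q - 1\<close>; as \<open>m\<close> and \<open>e\<close> both have degree \<open>q - 1\<close>, only the term \<open>m = e\<close> survives.\<close>

lemma sum_PiE_mpoly_eval_times_complementary_monomial:
  fixes G :: "'a::{finite,field} mpoly"
  assumes "homogeneous (card (UNIV :: 'a set) - 1) G" "vars_in n G" "e \<in> Poly_Mapping.keys G"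
  shows "(\<Sum>a\<in>PiE {..n} (\<lambda>_. UNIV).
      mpoly_eval G a * (\<Prod>i\<le>n. a i ^ (card (UNIV :: 'a set) - 1 - Poly_Mapping.lookup e i))) =
    Poly_Mapping.lookup G e * (-1) ^ Suc n"
proof -
  let ?q = "card (UNIV :: 'a set)"
  let ?k = "\<lambda>m i. Poly_Mapping.lookup m i + (?q - 1 - Poly_Mapping.lookup e i)"
  have exponent_le: "Poly_Mapping.lookup m i \<le> ?q - 1" if "m \<in> Poly_Mapping.keys G" for m i
    using assms(1) that lookup_le_mon_deg[of m i] unfolding homogeneous_def by auto
  have degree: "(\<Sum>i\<le>n. Poly_Mapping.lookup m i) = ?q - 1" if "m \<in> Poly_Mapping.keys G" for m
    using assms(1,2) that mon_deg_eq_sum_superset[of "{..n}" m]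
    unfolding homogeneous_def vars_in_def by auto
  have vanish: "(\<Prod>i\<le>n. power_sum (?k m i)) = (0::'a)"
    if m: "m \<in> Poly_Mapping.keys G" "m \<noteq> e" for m
  proof (rule ccontr)
    assume "(\<Prod>i\<le>n. power_sum (?k m i)) \<noteq> (0::'a)"
    then have "?q - 1 \<le> ?k m i" if "i \<le> n" for i
      using that card_minus_one_le_if_power_sum_ne_0 by force
    then have le: "Poly_Mapping.lookup e i \<le> Poly_Mapping.lookup m i" if "i \<le> n" for i
      using that exponent_le[OF assms(3), of i] by force
    then have "(\<Sum>i\<le>n. Poly_Mapping.lookup m i - Poly_Mapping.lookup e i) =
        (\<Sum>i\<le>n. Poly_Mapping.lookup m i) - (\<Sum>i\<le>n. Poly_Mapping.lookup e i)"
      by (intro sum_subtractf_nat) auto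
    also have "\<dots> = 0"
      using degree[OF m(1)] degree[OF assms(3)] by simp
    finally have "Poly_Mapping.lookup m i = Poly_Mapping.lookup e i" if "i \<le> n" for i
      using that le[OF that] by (simp add: le_antisym)
    moreover have "Poly_Mapping.keys m \<subseteq> {..n}" "Poly_Mapping.keys e \<subseteq> {..n}"
      using assms(2) m(1) assms(3) unfolding vars_in_def by blast+
    ultimately have "m = e"
      by (intro poly_mapping_eqI) (metis atMost_iff in_keys_iff subsetD)
    with m(2) show False ..
  qed
  have "?k e i = ?q - 1" for i
    using exponent_le[OF assms(3), of i] by simp
  then have "(\<Prod>i\<le>n. power_sum (?k e i)) = (\<Prod>i\<le>n. -1 :: 'a)"
    using card_UNIV_field_ge_2[where 'a = 'a] by (simp add: power_sum_multiple)
  then show ?thesis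
    using assms(3) vanish
    by (simp add: sum_PiE_mpoly_eval_times_monomial[OF assms(2)] sum.remove[of _ e] sum.neutral)
qed

lemma sum_PiE_complementary_monomial_eq_0:
  fixes n :: nat
  assumes "(\<Sum>i\<le>n. Poly_Mapping.lookup e i) = card (UNIV :: 'a set) - 1"
  shows "(\<Sum>a\<in>PiE {..n} (\<lambda>_. UNIV).
      \<Prod>i\<le>n. (a i :: 'a::{finite,field}) ^ (card (UNIV :: 'a set) - 1 - Poly_Mapping.lookup e i)) = 0"
proof -
  let ?q = "card (UNIV :: 'a set)"
  have "\<exists>i1\<le>n. 0 < Poly_Mapping.lookup e i1"
  proof (rule ccontr)
    assume "\<not> ?thesis"
    then have "(\<Sum>i\<le>n. Poly_Mapping.lookup e i) = 0"
      by simp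
    then show False
      using assms card_UNIV_field_ge_2[where 'a = 'a] by simp
  qed
  then obtain i1 where i1: "i1 \<le> n" "0 < Poly_Mapping.lookup e i1"
    by blast
  then have "power_sum (?q - 1 - Poly_Mapping.lookup e i1) = (0::'a)"
    using card_minus_one_le_if_power_sum_ne_0[of "?q - 1 - Poly_Mapping.lookup e i1"]
      card_UNIV_field_ge_2[where 'a = 'a] by force
  with i1 have "(\<Prod>i\<le>n. power_sum (?q - 1 - Poly_Mapping.lookup e i)) = (0::'a)"
    by (intro prod_zero) auto
  then show ?thesis
    by (simp add: sum_PiE_prod_power)
qed

lemma prod_complementary_monomial_eq_0:
  fixes n :: nat
  assumes "(\<Sum>i\<le>n. Poly_Mapping.lookup e i) = card (UNIV :: 'a set) - 1" "1 \<le> n"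
    and "\<forall>i\<le>n. a i = 0"
  shows "(\<Prod>i\<le>n. (a i :: 'a::{finite,field}) ^ (card (UNIV :: 'a set) - 1 - Poly_Mapping.lookup e i)) = 0"
proof -
  let ?q = "card (UNIV :: 'a set)"
  have "\<exists>i0\<le>n. Poly_Mapping.lookup e i0 < ?q - 1"
  proof (cases "Poly_Mapping.lookup e 0 < ?q - 1")
    case False
    have "Poly_Mapping.lookup e 0 + Poly_Mapping.lookup e 1 \<le> ?q - 1"
      using assms(1,2) sum_mono2[of "{..n}" "{0, 1}" "Poly_Mapping.lookup e"] by simp
    then have "Poly_Mapping.lookup e 1 < ?q - 1"
      using False card_UNIV_field_ge_2[where 'a = 'a] by linarith
    with assms(2) show ?thesis
      by blast
  qed blast
  then obtain i0 where i0: "i0 \<le> n" "Poly_Mapping.lookup e i0 < ?q - 1"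
    by blast
  then have "a i0 ^ (?q - 1 - Poly_Mapping.lookup e i0) = 0"
    using assms(3) by simp
  with i0(1) show ?thesis
    by (intro prod_zero) auto
qed

lemma homogeneous_card_minus_one_not_constant:
  fixes G :: "'a::{finite,field} mpoly"
  assumes "1 \<le> n" "G \<noteq> 0" "vars_in n G" "homogeneous (card (UNIV :: 'a set) - 1) G"
  shows "\<exists>a. (\<exists>i\<le>n. a i \<noteq> 0) \<and> mpoly_eval G a \<noteq> c"
proof (rule ccontr)
  let ?q = "card (UNIV :: 'a set)"
  assume "\<not> ?thesis"
  then have const_on_nonzero: "mpoly_eval G a = c" if "\<exists>i\<le>n. a i \<noteq> 0" for a
    using that by blast
  obtain e where e: "e \<in> Poly_Mapping.keys G"
    using assms(2) by (metis keys_eq_empty ex_in_conv)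
  let ?w = "\<lambda>a. \<Prod>i\<le>n. a i ^ (?q - 1 - Poly_Mapping.lookup e i)"
  have degree: "(\<Sum>i\<le>n. Poly_Mapping.lookup e i) = ?q - 1"
    using assms(3,4) e mon_deg_eq_sum_superset[of "{..n}" e]
    unfolding homogeneous_def vars_in_def by auto
  have pointwise: "mpoly_eval G a * ?w a = c * ?w a" for a
    using const_on_nonzero prod_complementary_monomial_eq_0[OF degree assms(1), of a] by fastforce
  have "(\<Sum>a\<in>PiE {..n} (\<lambda>_. UNIV). mpoly_eval G a * ?w a) = c * (\<Sum>a\<in>PiE {..n} (\<lambda>_. UNIV). ?w a)"
    by (simp only: pointwise sum_distrib_left)
  then have "Poly_Mapping.lookup G e * (-1) ^ Suc n = c * 0"
    unfolding sum_PiE_mpoly_eval_times_complementary_monomial[OF assms(4,3) e]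
      sum_PiE_complementary_monomial_eq_0[OF degree] .
  then show False
    using e by (simp add: in_keys_iff)
qed

section \<open>\<open>p\<close>-th powers\<close>

lemma CHAR_dvd_exponent_if_pderivs_eq_0:
  fixes F :: "'a::idom mpoly"
  assumes "\<And>i. i \<le> n \<Longrightarrow> mpoly_pderiv i F = 0" "vars_in n F" "m \<in> Poly_Mapping.keys F"
  shows "CHAR('a) dvd Poly_Mapping.lookup m i"
proof (cases "Poly_Mapping.lookup m i = 0")
  case False
  then have "i \<in> Poly_Mapping.keys m"
    by (simp add: in_keys_iff)
  then have "i \<le> n"
    using assms(2,3) unfolding vars_in_def by blast
  then have "of_nat (Poly_Mapping.lookup m i) * Poly_Mapping.lookup F m = (0::'a)"
    using lookup_pderiv[of m i F] False assms(1) by simp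
  then have "of_nat (Poly_Mapping.lookup m i) = (0::'a)"
    using assms(3) by (simp add: in_keys_iff)
  then show ?thesis
    by (simp only: of_nat_eq_0_iff_char_dvd)
qed simp

lemma CHAR_mpoly [simp]: "CHAR('a::comm_ring_1 mpoly) = CHAR('a)"
proof (rule CHAR_eqI)
  show "of_nat CHAR('a) = (0 :: 'a mpoly)"
    by (simp flip: single_of_nat)
  fix x assume "of_nat x = (0 :: 'a mpoly)"
  moreover have "(of_nat x :: 'a) = Poly_Mapping.lookup (of_nat x :: 'a mpoly) 0"
    by (simp flip: single_of_nat)
  ultimately have "of_nat x = (0 :: 'a)"
    by simp
  then show "CHAR('a) dvd x"
    by (simp add: of_nat_eq_0_iff_char_dvd)
qed

lemma single_power:
  "Poly_Mapping.single (k :: nat \<Rightarrow>\<^sub>0 nat) (c::'a::comm_ring_1) ^ j =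
     Poly_Mapping.single (Poly_Mapping.map ((*) j) k) (c ^ j)"
proof (induction j)
  case 0
  have "Poly_Mapping.map (\<lambda>_. 0) k = (0 :: nat \<Rightarrow>\<^sub>0 nat)"
    by (rule poly_mapping_eqI) (simp add: map.rep_eq)
  then show ?case
    by simp
next
  case (Suc j)
  have exponents: "Poly_Mapping.map ((*) j) k + k = Poly_Mapping.map ((*) (Suc j)) k"
    by (rule poly_mapping_eqI) (simp add: map.rep_eq when_def lookup_add)
  have "Poly_Mapping.single k c ^ Suc j = Poly_Mapping.single (Poly_Mapping.map ((*) j) k) (c ^ j) *
      Poly_Mapping.single k c"
    by (simp only: power_Suc2 Suc.IH)
  also have "\<dots> = Poly_Mapping.single (Poly_Mapping.map ((*) (Suc j)) k) (c ^ Suc j)"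
    by (simp only: mult_single exponents power_Suc2)
  finally show ?case .
qed

lemma mpoly_eq_CHAR_power_if_exponents_dvd:
  fixes F :: "'a::{finite,field} mpoly"
  assumes "\<And>m i. m \<in> Poly_Mapping.keys F \<Longrightarrow> CHAR('a) dvd Poly_Mapping.lookup m i"
  shows "\<exists>G. F = G ^ CHAR('a)"
proof -
  define root :: "'a \<Rightarrow> 'a" where "root c = (SOME r. r ^ CHAR('a) = c)" for c
  have root: "root c ^ CHAR('a) = c" for c
    unfolding root_def by (rule someI_ex[OF ex_CHAR_root])
  define divide_exponents :: "(nat \<Rightarrow>\<^sub>0 nat) \<Rightarrow> (nat \<Rightarrow>\<^sub>0 nat)"
    where "divide_exponents m = Poly_Mapping.map (\<lambda>e. e div CHAR('a)) m" for m
  have exponents: "Poly_Mapping.map ((*) CHAR('a)) (divide_exponents m) = m"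
    if m: "m \<in> Poly_Mapping.keys F" for m
  proof (rule poly_mapping_eqI)
    fix x
    obtain t where "Poly_Mapping.lookup m x = CHAR('a) * t"
      using assms[OF m] by blast
    then show "Poly_Mapping.lookup (Poly_Mapping.map ((*) CHAR('a)) (divide_exponents m)) x =
        Poly_Mapping.lookup m x"
      using prime_CHAR_finite_field[where 'a = 'a]
      by (simp add: divide_exponents_def map.rep_eq when_def prime_gt_0_nat)
  qed
  define G where "G = (\<Sum>m\<in>Poly_Mapping.keys F.
    Poly_Mapping.single (divide_exponents m) (root (Poly_Mapping.lookup F m)))"
  have "G ^ CHAR('a) = (\<Sum>m\<in>Poly_Mapping.keys F. Poly_Mapping.single m (Poly_Mapping.lookup F m))"
    unfolding G_def by (simp add: freshmans_dream_sum prime_CHAR_finite_field single_power exponents root)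
  also have "\<dots> = F"
    by (rule poly_mapping_sum_single[symmetric])
  finally show ?thesis
    by (intro exI[of _ G]) simp
qed

lemma CHAR_power_if_frobenius_sum_eq_0:
  fixes F :: "'a::{finite,field} mpoly"
  assumes "homogeneous d F" "vars_in n F" "d \<le> q" "frobenius_sum q n F = 0"
  shows "\<exists>G. F = G ^ CHAR('a)"
proof -
  have "mpoly_pderiv i F = 0" if "i \<le> n" for i
    using pderiv_eq_0_if_frobenius_sum_eq_0[OF assms(1,3,4) that] .
  then have "CHAR('a) dvd Poly_Mapping.lookup m i" if "m \<in> Poly_Mapping.keys F" for m i
    using CHAR_dvd_exponent_if_pderivs_eq_0[OF _ assms(2) that] by blast
  then show ?thesis
    by (rule mpoly_eq_CHAR_power_if_exponents_dvd)
qed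

theorem corollary2p4:
  fixes F :: "('a::{finite,field}) mpoly" and p q n d :: nat
  assumes "prime p" and "\<exists>k\<ge>1. q = p ^ k" and "card (UNIV :: 'a set) = q"
    and "n \<ge> 1" and "d \<ge> 1"
    and "F \<noteq> 0" and "homogeneous d F" and "vars_in n F"
    and "frobenius_nonclassical q n F"
    and "d \<le> q + 1"
    and "\<not> (\<exists>G. F = G ^ p)"
  shows "\<exists>a :: nat \<Rightarrow> 'a. (\<exists>i\<le>n. a i \<noteq> 0) \<and> mpoly_eval F a = 0"
proof (rule ccontr)
  assume no_point: "\<not> ?thesis"
  obtain k where k: "1 \<le> k" "q = p ^ k"
    using assms(2) by blast
  have CHAR: "CHAR('a) = p"
    using CHAR_eq_if_card_eq_prime_power[OF assms(1)] assms(3) k(2) by blast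
  obtain G where G: "frobenius_sum q n F = F * G"
    using assms(9) unfolding frobenius_nonclassical_iff_dvd by (auto elim: dvdE)
  have frobenius: "x ^ q = x" for x :: 'a
    using power_card_eq_self[of x] by (simp add: assms(3))
  have G_const: "mpoly_eval G a = of_nat d" if "\<exists>i\<le>n. a i \<noteq> 0" for a
    using mpoly_eval_frobenius_cofactor[OF frobenius assms(7,8) G] no_point that by blast
  show False
  proof (cases "G = 0")
    case True
    then have "p dvd d"
      using G_const[of "\<lambda>_. 1"] CHAR by (auto simp: of_nat_eq_0_iff_char_dvd)
    moreover have "\<not> p dvd q + 1"
      using dvd_add_right_iff[of p q 1] k assms(1) by (auto dest: prime_gt_1_nat)
    ultimately have "d \<le> q"
      using assms(10) by (cases "d = q + 1") auto
    then show False
      using CHAR_power_if_frobenius_sum_eq_0[OF assms(7,8)] G True CHAR assms(11) by simp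
  next
    case False
    have "homogeneous (card (UNIV :: 'a set) - 1) G"
      using homogeneous_frobenius_cofactor[OF assms(6,7,5) _ G] assms(3)
        card_UNIV_field_ge_2[where 'a = 'a] by simp
    then show False
      using homogeneous_card_minus_one_not_constant[OF assms(4) False
          vars_in_frobenius_cofactor[OF assms(6,8) G]] G_const by blast
  qed
qed

end
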